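(* Let $\omega_0=\min_{|z|=1}\operatorname{Re}\wp(z)$ ($\approx 0.136038$), $\gamma_0=\frac{2}{\pi}\sup_{z\in\mathbb{D}}|\arg\wp(z)|$ ($\approx 0.897828$), and $b=\max_{\theta\in[0,\pi]}T(\theta)$ ($\approx 1.58405$) where $T(\theta)=\dfrac{e^{2\cos\theta}\sin^2(\theta+\sin\theta)}{4(1+e^{\cos\theta}\cos(\theta+\sin\theta))}$. Then: (i) $\mathscr{S}^*_\wp\subset\mathcal{S}^*(\alpha)\subset\mathcal{S}^*$ for $0\le\alpha\le\omega_0$; (ii) $\mathscr{S}^*_\wp\subset\mathcal{M}(\beta)$ for $\beta\ge 1+e$, and $\mathscr{S}^*_\wp\subset\mathcal{S}^*(\omega_0)\cap\mathcal{M}(1+e)$; (iii) $\mathscr{S}^*_\wp\subset\mathcal{SS}^*(\gamma)\subset\mathcal{S}^*$ for $\gamma_0\le\gamma\le 1$; (iv) $\mathscr{S}^*_\wp\subset\mathcal{ST}_p(a)$ for $a\ge b$; (v) $k\text{-}\mathcal{ST}\subset\mathscr{S}^*_\wp$ for $k\ge e-1$.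
   Context: $\mathbb{D}$ is the unit disk; $\mathcal{A}$ is the class of analytic $f$ on $\mathbb{D}$ with $f(0)=0$, $f'(0)=1$. For analytic $f,g$, $f\prec g$ means $f=g\circ\omega$ for some analytic $\omega:\mathbb{D}\to\mathbb{D}$ with $\omega(0)=0$. $\wp(z)=1+ze^z$ and $\mathscr{S}^*_\wp=\{f\in\mathcal{A}: zf'(z)/f(z)\prec\wp(z)\}$. $\mathcal{S}^*(\alpha)=\{f\in\mathcal{A}:\operatorname{Re}(zf'/f)>\alpha\}$, $\mathcal{S}^*=\mathcal{S}^*(0)$; $\mathcal{M}(\beta)=\{f\in\mathcal{A}:\operatorname{Re}(zf'/f)<\beta\}$ ($\beta>1$); $\mathcal{SS}^*(\gamma)=\{f\in\mathcal{A}:|\arg(zf'/f)|<\gamma\pi/2\}$ ($0<\gamma\le1$); $k\text{-}\mathcal{ST}=\{f\in\mathcal{A}:\operatorname{Re}(zf'/f)>k|zf'/f-1|\}$ ($k\ge0$); $\mathcal{ST}_p(a)=\{f\in\mathcal{A}:\operatorname{Re}(zf'/f)+a>|zf'/f-a|\}$ ($a>0$). *)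

theory Defs
  imports "HOL-Analysis.Analysis"
begin

definition unit_disk :: "complex set" where
  "unit_disk = ball 0 1"

definition classA :: "(complex \<Rightarrow> complex) set" where
  "classA = {f. f holomorphic_on unit_disk \<and> f 0 = 0 \<and> deriv f 0 = 1}"

definition subordinate :: "(complex \<Rightarrow> complex) \<Rightarrow> (complex \<Rightarrow> complex) \<Rightarrow> bool" where
  "subordinate f g \<longleftrightarrow> (\<exists>w. w holomorphic_on unit_disk \<and> w ` unit_disk \<subseteq> unit_disk \<and> w 0 = 0
        \<and> (\<forall>z\<in>unit_disk. f z = g (w z)))"

definition sq :: "(complex \<Rightarrow> complex) \<Rightarrow> complex \<Rightarrow> complex" where
  "sq f z = (if z = 0 then 1 else z * deriv f z / f z)"

definition quot_defined :: "(complex \<Rightarrow> complex) \<Rightarrow> bool" where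
  "quot_defined f \<longleftrightarrow> (\<forall>z\<in>unit_disk. z \<noteq> 0 \<longrightarrow> f z \<noteq> 0)"

definition wp :: "complex \<Rightarrow> complex" where
  "wp z = 1 + z * exp z"

definition S_wp :: "(complex \<Rightarrow> complex) set" where
  "S_wp = {f \<in> classA. quot_defined f \<and> subordinate (sq f) wp}"

definition starlike_order :: "real \<Rightarrow> (complex \<Rightarrow> complex) set" where
  "starlike_order \<alpha> = {f \<in> classA. quot_defined f \<and> (\<forall>z\<in>unit_disk. Re (sq f z) > \<alpha>)}"

definition starlike :: "(complex \<Rightarrow> complex) set" where
  "starlike = starlike_order 0"

definition classM :: "real \<Rightarrow> (complex \<Rightarrow> complex) set" where
  "classM \<beta> = {f \<in> classA. quot_defined f \<and> (\<forall>z\<in>unit_disk. Re (sq f z) < \<beta>)}"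

definition strongly_starlike :: "real \<Rightarrow> (complex \<Rightarrow> complex) set" where
  "strongly_starlike \<gamma> = {f \<in> classA. quot_defined f \<and>
      (\<forall>z\<in>unit_disk. \<bar>Arg (sq f z)\<bar> < \<gamma> * pi / 2)}"

definition k_ST :: "real \<Rightarrow> (complex \<Rightarrow> complex) set" where
  "k_ST k = {f \<in> classA. quot_defined f \<and>
      (\<forall>z\<in>unit_disk. Re (sq f z) > k * cmod (sq f z - 1))}"

definition ST_p :: "real \<Rightarrow> (complex \<Rightarrow> complex) set" where
  "ST_p a = {f \<in> classA. quot_defined f \<and>
      (\<forall>z\<in>unit_disk. Re (sq f z) + a > cmod (sq f z - of_real a))}"

definition omega0 :: real where
  "omega0 = Inf ((\<lambda>z. Re (wp z)) ` sphere 0 1)"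

definition gamma0 :: real where
  "gamma0 = 2 / pi * (SUP z\<in>unit_disk. \<bar>Arg (wp z)\<bar>)"

definition Tfun :: "real \<Rightarrow> real" where
  "Tfun \<theta> = exp (2 * cos \<theta>) * (sin (\<theta> + sin \<theta>))\<^sup>2 /
              (4 * (1 + exp (cos \<theta>) * cos (\<theta> + sin \<theta>)))"

definition b_const :: real where
  "b_const = Sup (Tfun ` {0..pi})"

end

(*
  Everything except (v) is read off from the values of \<wp> on the unit disk, since z f'/f takes
  its values in \<wp>(\<bbbD>).  Re \<wp> and the auxiliary function Re ((1 - c) \<wp> + r) for |c| = 1 are
  harmonic, so by the minimum principle the bounds Re \<wp> > \<omega>\<^sub>0 and |\<wp> - a| < Re \<wp> + a
  (a \<ge> b) follow from elementary estimates on the unit circle; the latter is the parabola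
  (Im \<wp>)\<^sup>2 \<le> 4 a Re \<wp>, which is where T comes from.  The supremum defining \<gamma>\<^sub>0 is not
  attained because \<wp>(\<bbbD>) is open.

  For (v), \<wp> is univalent on the convex set V of points of \<bbbD> where Re \<wp>' > 0.  On the boundary
  of V (the unit circle or the curve Re \<wp>' = 0) one has Re \<wp> \<le> (e - 1)|\<wp> - 1|.  The region
  (e - 1)|w - 1| < Re w contains the segment from 1 = \<wp>(0) to each of its points, so by
  connectedness it lies in \<wp>(V).  It contains the values of z f'/f for f \<in> k-ST with k \<ge> e - 1,
  and composing with the inverse of \<wp> on \<wp>(V) gives the subordinating function.
*)
theory Submission
  imports Defs "HOL-Complex_Analysis.Conformal_Mappings"
begin

section \<open>Elementary real estimates\<close>

lemma sin_le_taylor7: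
  fixes t :: real
  assumes "0 \<le> t"
  shows "sin t \<le> t - t^3/6 + t^5/120 + t^7/5040"
proof -
  have "\<bar>sin t - (\<Sum>m<7. sin_coeff m * t ^ m)\<bar> \<le> inverse (fact 7) * \<bar>t\<bar> ^ 7"
    by (rule Maclaurin_sin_bound)
  moreover have "(\<Sum>m<7. sin_coeff m * t ^ m) = t - t^3/6 + t^5/120"
    by (simp add: lessThan_Suc eval_nat_numeral sin_coeff_Suc cos_coeff_Suc)
  moreover have "inverse (fact 7) * \<bar>t\<bar> ^ 7 = t^7/5040"
    using assms by (simp add: fact_numeral field_simps)
  ultimately show ?thesis by linarith
qed

lemma sin_ge_taylor5:
  fixes t :: real
  assumes "0 \<le> t"
  shows "t - t^3/6 - t^5/120 \<le> sin t"
proof -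
  have "\<bar>sin t - (\<Sum>m<5. sin_coeff m * t ^ m)\<bar> \<le> inverse (fact 5) * \<bar>t\<bar> ^ 5"
    by (rule Maclaurin_sin_bound)
  moreover have "(\<Sum>m<5. sin_coeff m * t ^ m) = t - t^3/6"
    by (simp add: lessThan_Suc eval_nat_numeral sin_coeff_Suc cos_coeff_Suc)
  moreover have "inverse (fact 5) * \<bar>t\<bar> ^ 5 = t^5/120"
    using assms by (simp add: fact_numeral field_simps)
  ultimately show ?thesis by linarith
qed

lemma one_minus_square_div2_le_cos:
  fixes y :: real
  shows "1 - y^2/2 \<le> cos y"
proof -
  have "(sin (y/2))^2 \<le> (y/2)^2"
    using abs_sin_x_le_abs_x[of "y/2"] by (metis abs_ge_zero power2_abs power_mono)
  then show ?thesis
    using cos_double_sin[of "y/2"] by (simp add: power_divide)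
qed

lemma mult_sin_self_abs:
  fixes y :: real
  shows "y * sin y = \<bar>y\<bar> * sin \<bar>y\<bar>"
  by (cases "y \<ge> 0") auto

lemma mult_sin_self_le_taylor:
  fixes y :: real
  shows "y * sin y \<le> y^2 - y^4/6 + y^6/120 + y^8/5040"
proof -
  have "\<bar>y\<bar> * sin \<bar>y\<bar> \<le> \<bar>y\<bar> * (\<bar>y\<bar> - \<bar>y\<bar>^3/6 + \<bar>y\<bar>^5/120 + \<bar>y\<bar>^7/5040)"
    by (intro mult_left_mono sin_le_taylor7) auto
  then show ?thesis
    by (simp add: mult_sin_self_abs[of y] algebra_simps eval_nat_numeral)
qed

lemma mult_sin_self_ge_taylor:
  fixes y :: real
  shows "y^2 - y^4/6 - y^6/120 \<le> y * sin y"
proof -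
  have "\<bar>y\<bar> * (\<bar>y\<bar> - \<bar>y\<bar>^3/6 - \<bar>y\<bar>^5/120) \<le> \<bar>y\<bar> * sin \<bar>y\<bar>"
    by (intro mult_left_mono sin_ge_taylor5) auto
  then show ?thesis
    by (simp add: mult_sin_self_abs[of y] algebra_simps eval_nat_numeral)
qed

lemma mult_sin_self_less_square:
  fixes y :: real
  assumes "y \<noteq> 0" "\<bar>y\<bar> \<le> 1"
  shows "y * sin y < y^2"
proof -
  define s where "s = y^2"
  have s: "0 < s" "s \<le> 1"
    using assms unfolding s_def by (auto simp: abs_le_square_iff[of y 1, simplified])
  have "y * sin y \<le> s - s * s * (1/6 - s/120 - s * s/5040)"
    using mult_sin_self_le_taylor[of y] unfolding s_def by (simp add: algebra_simps eval_nat_numeral)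
  moreover have "0 < s * s * (1/6 - s/120 - s * s/5040)"
    using s mult_le_one[OF s(2) _ s(2)] by simp
  ultimately show ?thesis unfolding s_def by linarith
qed

lemma exp_one_bounds: "2.7 < exp (1::real)" "exp (1::real) < 2.72"
  using e_approx_32 by (simp_all add: abs_if split: if_splits)

lemma exp_minus_one_le: "exp (-1::real) \<le> exp 1 - 2"
proof -
  have "(27/10) * (7/10) \<le> exp 1 * (exp (1::real) - 2)"
    using exp_one_bounds by (intro mult_mono) auto
  then show ?thesis using exp_one_bounds by (simp add: exp_minus field_simps)
qed

lemma one_minus_cos_le_mult_sin_self:
  fixes y :: real
  assumes "y^2 \<le> 1"
  shows "1 - cos y \<le> y * sin y"
proof -
  have "(y^2)^2 \<le> (y^2)^1" "(y^2)^3 \<le> (y^2)^2"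
    using assms by (intro power_decreasing; simp)+
  then have "y^4 \<le> y^2" "y^6 \<le> y^4" by (simp_all flip: power_mult)
  then have "y^2/2 \<le> y^2 - y^4/6 - y^6/120" using zero_le_power2[of y] by linarith
  then show ?thesis
    using one_minus_square_div2_le_cos[of y] mult_sin_self_ge_taylor[of y] by linarith
qed

(* For z = x + i y on the unit circle this is Re \<wp>(z) > 0, proved separately for x \<le> 0 and x > 0. *)
lemma exp_mult_less_one_on_left_semicircle:
  fixes x y :: real
  assumes xy: "x^2 + y^2 = 1" and x: "x \<le> 0"
  shows "exp x * (y * sin y - x * cos y) < 1"
proof (cases "y = 0")
  case True
  then have "x = -1" using xy x power2_eq_1_iff[of x] by auto
  with True show ?thesis by simp
next
  case False
  have "y^2 \<le> 1" using xy zero_le_power2[of x] by linarith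
  then have y1: "\<bar>y\<bar> \<le> 1" by (simp add: abs_square_le_1)
  have "- x * cos y \<le> - x" using mult_left_mono[OF cos_le_one[of y], of "-x"] x by simp
  then have "y * sin y - x * cos y < y^2 - x"
    using mult_sin_self_less_square[OF False y1] by linarith
  also have "\<dots> \<le> 1 - x"
    using \<open>y^2 \<le> 1\<close> by linarith
  finally have "exp x * (y * sin y - x * cos y) < exp x * (1 - x)" by simp
  also have "\<dots> \<le> exp x * exp (- x)"
    using exp_ge_add_one_self[of "-x"] by (intro mult_left_mono) auto
  finally show ?thesis by (simp flip: exp_add)
qed

(* exp x \<le> 1 + x + x\<^sup>2 on [0, 1], and the second factor is the Taylor bound for
   y sin y - x cos y on the unit circle, where y\<^sup>2 = t *)
lemma taylor_polynomial_estimate: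
  fixes x t :: real
  assumes x: "0 < x" "x \<le> 1" and t: "t = 1 - x^2"
  shows "(1 + x + x^2) * (t - t^2/6 + t^3/120 + t^4/5040 - x + x*t/2) < 1"
proof -
  define B where "B = t - t^2/6 + t^3/120 + t^4/5040 - x + x*t/2"
  have B: "5040 * B = 5040*t - 840*t^2 + 42*t^3 + t^4 - 5040*x + 2520*x*t"
    unfolding B_def by (simp add: algebra_simps)
  have "5040 * (1 - (1 + x + x^2) * B) = 5040 - (1 + x + x^2) * (5040 * B)"
    by (simp add: algebra_simps)
  also have "\<dots> = 5040 - (1 + x + x^2) * (5040*t - 840*t^2 + 42*t^3 + t^4 - 5040*x + 2520*x*t)"
    unfolding B ..
  also have "\<dots> = (797 - 1723*x + 1767*x^2)
        + x^3 * (8530 + 6718*x + 3228*x^2 + 754*x^3 + 46*x^4 + 45*x^5 - x^6 - x^7)"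
    unfolding t by (simp add: algebra_simps eval_nat_numeral)
  finally have "5040 * (1 - (1 + x + x^2) * B) = \<dots>" .
  moreover have "0 < 797 - 1723*x + 1767*x^2"
    using zero_le_power2[of "x - 1723/3534"] by (simp add: power2_eq_square algebra_simps)
  moreover have "0 \<le> 8530 + 6718*x + 3228*x^2 + 754*x^3 + 46*x^4 + 45*x^5 - x^6 - x^7"
  proof -
    have "x^6 \<le> 1" "x^7 \<le> 1" using x by (simp_all add: power_le_one)
    moreover have "0 \<le> x^2" "0 \<le> x^3" "0 \<le> x^4" "0 \<le> x^5" using x by simp_all
    ultimately show ?thesis using x by linarith
  qed
  then have "0 \<le> x^3 * (8530 + 6718*x + 3228*x^2 + 754*x^3 + 46*x^4 + 45*x^5 - x^6 - x^7)"
    using x by simp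
  ultimately have "0 < 5040 * (1 - (1 + x + x^2) * B)" by linarith
  then show ?thesis unfolding B_def by simp
qed

lemma exp_mult_less_one_on_right_semicircle:
  fixes x y :: real
  assumes xy: "x^2 + y^2 = 1" and x: "0 < x"
  shows "exp x * (y * sin y - x * cos y) < 1"
proof -
  define t where "t = 1 - x^2"
  define B where "B = t - t^2/6 + t^3/120 + t^4/5040 - x + x*t/2"
  have "x^2 \<le> 1" using xy zero_le_power2[of y] by linarith
  then have x1: "x \<le> 1" by (simp add: abs_square_le_1)
  have y2: "y^2 = t" using xy unfolding t_def by simp
  have "y * sin y \<le> t - t^2/6 + t^3/120 + t^4/5040"
  proof -
    have "y^4 = t^2" "y^6 = t^3" "y^8 = t^4"
      by (simp_all flip: y2 power_mult)
    then show ?thesis using mult_sin_self_le_taylor[of y] y2 by simp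
  qed
  moreover have "x * (1 - t/2) \<le> x * cos y"
    using one_minus_square_div2_le_cos[of y] x y2 by (simp add: mult_left_mono)
  ultimately have bound: "y * sin y - x * cos y \<le> B" unfolding B_def by (simp add: algebra_simps)
  show ?thesis
  proof (cases "B \<le> 0")
    case True
    then have "exp x * (y * sin y - x * cos y) \<le> 0"
      using bound by (simp add: mult_nonneg_nonpos)
    then show ?thesis by linarith
  next
    case False
    have "exp x * (y * sin y - x * cos y) \<le> exp x * B" using bound by simp
    also have "\<dots> \<le> (1 + x + x^2) * B" using exp_bound[of x] x x1 False by (simp add: mult_right_mono)
    also have "\<dots> < 1" unfolding B_def by (rule taylor_polynomial_estimate[OF x x1 t_def])
    finally show ?thesis .
  qed
qed

lemma exp_mult_less_one_on_circle:
  fixes x y :: real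
  assumes "x^2 + y^2 = 1"
  shows "exp x * (y * sin y - x * cos y) < 1"
proof (cases "x \<le> 0")
  case True
  then show ?thesis by (rule exp_mult_less_one_on_left_semicircle[OF assms])
next
  case False
  then show ?thesis by (intro exp_mult_less_one_on_right_semicircle[OF assms]) simp
qed

lemma exp_neg_add_le_on_circle:
  fixes x y :: real
  assumes xy: "x^2 + y^2 = 1"
  shows "exp (-x) + (x * cos y - y * sin y) \<le> exp 1 - 1"
proof -
  have "x^2 \<le> 1" "y^2 \<le> 1" using xy zero_le_power2[of x] zero_le_power2[of y] by linarith+
  then have x1: "\<bar>x\<bar> \<le> 1" by (simp add: abs_square_le_1)
  have "exp (-x) = exp ((1 - (1 + x)/2) * 1 + ((1 + x)/2) * (-1))"
    by (simp add: field_simps)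
  also have "\<dots> \<le> (1 - (1 + x)/2) * exp 1 + ((1 + x)/2) * exp (-1)"
    using x1 by (intro convex_onD[OF exp_convex, simplified]) auto
  also have "\<dots> \<le> (1 - (1 + x)/2) * exp 1 + ((1 + x)/2) * (exp 1 - 2)"
    using x1 exp_minus_one_le by (intro add_left_mono mult_left_mono) auto
  finally have "exp (-x) \<le> exp 1 - 1 - x" by (simp add: field_simps)
  moreover have "(1 + x) * cos y \<le> 1 + x"
    using mult_left_mono[OF cos_le_one[of y], of "1 + x"] x1 by simp
  moreover have "1 - cos y \<le> y * sin y"
    using \<open>y^2 \<le> 1\<close> by (rule one_minus_cos_le_mult_sin_self)
  ultimately show ?thesis by (simp add: algebra_simps)
qed

lemma exp_neg_diff_cos_le_on_disk:
  fixes x y :: real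
  assumes xy: "x^2 + y^2 \<le> 1"
  shows "exp (-x) - cos y \<le> (exp 1 - 1) * sqrt (x^2 + y^2)"
proof -
  have y1: "y^2 \<le> 1" and "x^2 \<le> 1" using xy zero_le_power2[of x] zero_le_power2[of y] by linarith+
  then have x1: "\<bar>x\<bar> \<le> 1" and y1': "\<bar>y\<bar> \<le> 1" by (simp_all add: abs_square_le_1)
  have e1: "1 \<le> exp 1 - (1::real)" using exp_one_bounds by simp
  have cos_y: "1 - cos y \<le> y^2/2" using one_minus_square_div2_le_cos[of y] by simp
  show ?thesis
  proof (cases "x \<le> 0")
    case False
    have "y^2 \<le> \<bar>y\<bar>"
      using mult_left_mono[OF y1', of "\<bar>y\<bar>"] by (simp add: power2_eq_square)
    also have "\<bar>y\<bar> \<le> sqrt (x^2 + y^2)"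
      using real_sqrt_le_mono[of "y^2" "x^2 + y^2"] by simp
    finally have "y^2 \<le> sqrt (x^2 + y^2)" .
    moreover have "sqrt (x^2 + y^2) \<le> (exp 1 - 1) * sqrt (x^2 + y^2)"
      using mult_right_mono[OF e1, of "sqrt (x^2 + y^2)"] by simp
    moreover have "exp (-x) \<le> 1" using False by simp
    ultimately show ?thesis using cos_y zero_le_power2[of y] by linarith
  next
    case True
    define u where "u = -x"
    have u: "0 \<le> u" "u \<le> 1" using True x1 unfolding u_def by auto
    have "exp u = exp ((1 - u) * 0 + u * 1)" by simp
    also have "\<dots> \<le> (1 - u) * exp 0 + u * exp 1"
      using u by (intro convex_onD[OF exp_convex, simplified]) auto
    finally have "exp (-x) - cos y \<le> (exp 1 - 1) * u + y^2/2"
      using cos_y unfolding u_def by (simp add: algebra_simps)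
    also have "\<dots> \<le> (exp 1 - 1) * (u + y^2/2)"
      using mult_right_mono[OF e1, of "y^2/2"] by (simp add: algebra_simps)
    also have "\<dots> \<le> (exp 1 - 1) * sqrt (x^2 + y^2)"
    proof -
      have "u^2 + y^2 \<le> 1" using xy unfolding u_def by simp
      moreover have "(1 - y^2/2)^2 = 1 - y^2 + y^2 * y^2/4"
        by (simp add: power2_eq_square algebra_simps)
      moreover have "0 \<le> y^2 * y^2" by simp
      ultimately have "u^2 \<le> (1 - y^2/2)^2" by linarith
      then have "u \<le> 1 - y^2/2"
        by (rule power2_le_imp_le) (use y1 in simp)
      then have "u + y^2/4 \<le> 1" using zero_le_power2[of y] by linarith
      then have "(u + y^2/4) * y^2 \<le> 1 * y^2" by (rule mult_right_mono) simp
      moreover have "(u + y^2/2)^2 = u^2 + (u + y^2/4) * y^2"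
        by (simp add: power2_eq_square algebra_simps)
      ultimately have "(u + y^2/2)^2 \<le> u^2 + y^2" by linarith
      also have "u^2 + y^2 = x^2 + y^2" unfolding u_def by simp
      finally have "u + y^2/2 \<le> sqrt (x^2 + y^2)" by (rule real_le_rsqrt)
      then show ?thesis by (rule mult_left_mono) (use e1 in simp)
    qed
    finally show ?thesis .
  qed
qed

section \<open>The function \<open>\<wp>\<close>\<close>

lemma wp_holomorphic [holomorphic_intros]: "wp holomorphic_on S"
  unfolding wp_def[abs_def] by (intro holomorphic_intros)

lemma continuous_on_wp: "continuous_on S wp"
  by (rule holomorphic_on_imp_continuous_on[OF wp_holomorphic])

lemma has_field_derivative_wp: "(wp has_field_derivative (1 + z) * exp z) (at z)"
  unfolding wp_def[abs_def] by (auto intro!: derivative_eq_intros simp: algebra_simps)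

lemma Re_wp: "Re (wp z) = 1 + exp (Re z) * (Re z * cos (Im z) - Im z * sin (Im z))"
  by (simp add: wp_def Re_exp Im_exp algebra_simps)

lemma Im_wp: "Im (wp z) = exp (Re z) * (Re z * sin (Im z) + Im z * cos (Im z))"
  by (simp add: wp_def Re_exp Im_exp algebra_simps)

lemma norm_wp_minus_one: "cmod (wp z - 1) = cmod z * exp (Re z)"
  by (simp add: wp_def norm_mult)

lemma Re_deriv_wp: "Re ((1 + z) * exp z) = exp (Re z) * ((1 + Re z) * cos (Im z) - Im z * sin (Im z))"
  by (simp add: Re_exp Im_exp algebra_simps)

lemma wp_minus_const_not_constant: "\<not> (\<lambda>z. wp z - c) constant_on ball 0 1"
proof
  assume "(\<lambda>z. wp z - c) constant_on ball 0 1"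
  moreover have "0 \<in> ball (0::complex) 1" "1/2 \<in> ball (0::complex) 1"
    by (simp_all add: norm_divide)
  ultimately have "wp 0 - c = wp (1/2) - c"
    unfolding constant_on_def by metis
  then show False by (simp add: wp_def)
qed

lemma open_wp_image: "open (wp ` ball 0 1)"
  using wp_minus_const_not_constant[of 0] by (intro open_mapping_thm[OF wp_holomorphic]) auto

lemma Re_wp_pos_on_circle:
  assumes "cmod z = 1"
  shows "0 < Re (wp z)"
proof -
  have "(Re z)^2 + (Im z)^2 = 1" using assms by (simp add: cmod_power2[symmetric])
  from exp_mult_less_one_on_circle[OF this] show ?thesis
    unfolding Re_wp by (simp add: algebra_simps)
qed

lemma Re_wp_le_on_circle:
  assumes "cmod z = 1"
  shows "Re (wp z) \<le> (exp 1 - 1) * cmod (wp z - 1)"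
proof -
  have "(Re z)^2 + (Im z)^2 = 1" using assms by (simp add: cmod_power2[symmetric])
  from exp_neg_add_le_on_circle[OF this]
  have "exp (Re z) * (exp (- Re z) + (Re z * cos (Im z) - Im z * sin (Im z))) \<le> exp (Re z) * (exp 1 - 1)"
    by (intro mult_left_mono) auto
  then show ?thesis
    unfolding Re_wp norm_wp_minus_one assms by (simp add: algebra_simps exp_minus)
qed

lemma Re_wp_le_on_critical_curve:
  assumes "cmod z \<le> 1" and "Re ((1 + z) * exp z) = 0"
  shows "Re (wp z) \<le> (exp 1 - 1) * cmod (wp z - 1)"
proof -
  have "(Re z)^2 + (Im z)^2 \<le> 1"
    using assms(1) by (simp add: cmod_power2[symmetric] power_le_one)
  from exp_neg_diff_cos_le_on_disk[OF this]
  have bound: "exp (Re z) * (exp (- Re z) - cos (Im z)) \<le> exp (Re z) * ((exp 1 - 1) * cmod z)"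
    by (intro mult_left_mono) (auto simp: cmod_def)
  have "(1 + Re z) * cos (Im z) - Im z * sin (Im z) = 0"
    using assms(2) unfolding Re_deriv_wp by simp
  then have critical: "Re z * cos (Im z) - Im z * sin (Im z) = - cos (Im z)"
    by (simp add: algebra_simps)
  have "Re (wp z) = exp (Re z) * (exp (- Re z) - cos (Im z))"
    unfolding Re_wp critical by (simp add: algebra_simps exp_minus)
  with bound show ?thesis
    unfolding norm_wp_minus_one by (simp add: algebra_simps)
qed

section \<open>Consequences of the open mapping theorem\<close>

lemma Re_pos_if_Re_nonneg_on_frontier:
  assumes S: "open S" "bounded S" "connected S"
    and g: "g holomorphic_on S" "continuous_on (closure S) g" "\<not> g constant_on S"
    and frontier: "\<And>w. w \<in> frontier S \<Longrightarrow> 0 \<le> Re (g w)"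
    and z: "z \<in> S"
  shows "0 < Re (g z)"
proof -
  have nonneg: "0 \<le> Re (g w)" if "w \<in> S" for w
  proof -
    have "norm (exp (- g w)) \<le> 1"
    proof (rule maximum_modulus_frontier[where f = "\<lambda>w. exp (- g w)"])
      show "(\<lambda>w. exp (- g w)) holomorphic_on interior S"
        using g(1) S(1) by (simp add: interior_open holomorphic_intros)
      show "continuous_on (closure S) (\<lambda>w. exp (- g w))"
        using g(2) by (intro continuous_intros)
      show "norm (exp (- g u)) \<le> 1" if "u \<in> frontier S" for u
        using frontier[OF that] by simp
    qed (use S that in auto)
    then show ?thesis by simp
  qed
  have "open (g ` S)"
    using S g by (intro open_mapping_thm[OF g(1)]) auto
  then obtain r where r: "r > 0" "ball (g z) r \<subseteq> g ` S"
    using z openE by blast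
  then have "g z - of_real (r/2) \<in> g ` S"
    by (auto simp: dist_norm)
  then obtain w where "w \<in> S" "g w = g z - of_real (r/2)" by auto
  then have "Re (g z) - r/2 \<ge> 0" using nonneg by fastforce
  then show ?thesis using r by linarith
qed

lemma norm_less_Re_add_if_on_frontier:
  fixes r :: real
  assumes S: "open S" "bounded S" "connected S"
    and g: "g holomorphic_on S" "continuous_on (closure S) g" "\<not> g constant_on S"
    and frontier: "\<And>w. w \<in> frontier S \<Longrightarrow> cmod (g w) \<le> Re (g w) + r"
    and r: "0 < r" and z: "z \<in> S"
  shows "cmod (g z) < Re (g z) + r"
proof (cases "Re (g z) = cmod (g z)")
  case True
  with r show ?thesis by simp
next
  case False
  define c where "c = g z / of_real (cmod (g z))"
  have gz: "g z \<noteq> 0" using False by auto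
  have c1: "cmod c = 1" using gz unfolding c_def by (simp add: norm_divide)
  have c2: "c \<noteq> 1"
  proof
    assume "c = 1"
    then have "g z = of_real (cmod (g z))" using gz unfolding c_def by (simp add: field_simps)
    then have "Re (g z) = cmod (g z)" by (metis Re_complex_of_real)
    with False show False ..
  qed
  have "cnj (g z) * g z = (of_real (cmod (g z)))^2"
    by (metis complex_norm_square mult.commute of_real_power)
  then have c3: "cnj c * g z = of_real (cmod (g z))"
    using gz unfolding c_def by (simp add: power2_eq_square)
  \<comment> \<open>\<open>cnj c\<close> rotates \<open>g z\<close> onto the positive real axis\<close>
  define h where "h = (\<lambda>w. (1 - cnj c) * g w + of_real r)"
  have Re_h: "Re (h w) = Re (g w) + r - Re (cnj c * g w)" for w
    unfolding h_def by (simp add: algebra_simps)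
  have "0 < Re (h z)"
  proof (rule Re_pos_if_Re_nonneg_on_frontier[OF S _ _ _ _ z])
    show "h holomorphic_on S" "continuous_on (closure S) h"
      unfolding h_def using g by (auto intro!: holomorphic_intros continuous_intros)
    have "1 - cnj c \<noteq> 0" using c2 by (metis complex_cnj_cnj complex_cnj_one eq_iff_diff_eq_0)
    then show "\<not> h constant_on S"
      using g(3) unfolding h_def constant_on_def by (metis add_diff_cancel_right' mult_cancel_left)
    fix w assume "w \<in> frontier S"
    have "Re (cnj c * g w) \<le> cmod (g w)"
      using complex_Re_le_cmod[of "cnj c * g w"] c1 by (simp add: norm_mult)
    then show "0 \<le> Re (h w)" using frontier[OF \<open>w \<in> frontier S\<close>] Re_h[of w] by linarith
  qed
  then show ?thesis using Re_h[of z] c3 by simp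
qed

lemma open_has_larger_abs_Arg:
  assumes U: "open U" "w \<in> U" and w: "0 < Re w"
  obtains u where "u \<in> U" "\<bar>Arg w\<bar> < \<bar>Arg u\<bar>"
proof -
  define \<rho> where "\<rho> = (\<lambda>t::real. of_real (cmod w) * exp (\<i> * of_real (Arg w + t)))"
  have "w \<noteq> 0" using w by auto
  then have "\<rho> 0 = w" unfolding \<rho>_def using Arg_eq by simp
  moreover have "isCont \<rho> 0" unfolding \<rho>_def by (intro continuous_intros)
  ultimately have "\<forall>\<^sub>F t in at 0. \<rho> t \<in> U"
    using U by (metis isCont_def topological_tendstoD)
  then obtain d where d: "d > 0" "\<And>t. t \<noteq> 0 \<Longrightarrow> dist t 0 < d \<Longrightarrow> \<rho> t \<in> U"
    unfolding eventually_at by blast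
  define s where "s = (if 0 \<le> Arg w then 1 else -1::real)"
  define e where "e = min (d/2) (pi/4)"
  have e: "0 < e" "e < d" "e \<le> pi/4" using d unfolding e_def by auto
  have "\<bar>Arg w\<bar> < pi/2" using w Arg_Re_pos by blast
  then have "Arg (\<rho> (s * e)) = Arg w + s * e"
    unfolding \<rho>_def using e \<open>w \<noteq> 0\<close> by (intro Arg_unique[of "cmod w"]) (auto simp: s_def)
  then have "\<bar>Arg (\<rho> (s * e))\<bar> = \<bar>Arg w\<bar> + e" using e by (auto simp: s_def)
  moreover have "\<rho> (s * e) \<in> U" using d e by (intro d(2)) (auto simp: s_def)
  ultimately show ?thesis using e that by auto
qed

lemma Re_pos_if_abs_Arg_less:
  assumes S: "open S" "connected S" and g: "g holomorphic_on S"
    and z0: "z0 \<in> S" "g z0 \<noteq> 0"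
    and Arg: "\<And>z. z \<in> S \<Longrightarrow> \<bar>Arg (g z)\<bar> < pi / 2"
    and z: "z \<in> S"
  shows "0 < Re (g z)"
proof -
  have "g z \<noteq> 0"
  proof
    assume "g z = 0"
    then have "\<not> g constant_on S" using z z0 unfolding constant_on_def by metis
    then have "open (g ` S)" using S by (intro open_mapping_thm[OF g]) auto
    then obtain r where "r > 0" "ball 0 r \<subseteq> g ` S"
      using z \<open>g z = 0\<close> openE by (metis imageI)
    then have "- of_real (r/2) \<in> g ` S" by (auto simp: dist_norm)
    then obtain w where "w \<in> S" "g w = - of_real (r/2)" by auto
    moreover have "Arg (- of_real (r/2)) = pi" using \<open>r > 0\<close> by (simp add: Arg_eq_pi)
    ultimately show False using Arg pi_gt_zero by fastforce
  qed
  then show ?thesis using Arg[OF z] Arg_Re_pos by blast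
qed

section \<open>The constants \<open>\<omega>\<^sub>0\<close>, \<open>\<gamma>\<^sub>0\<close> and \<open>b\<close>\<close>

lemma omega0_le_Re_wp:
  assumes "cmod z = 1"
  shows "omega0 \<le> Re (wp z)"
  unfolding omega0_def
proof (rule cInf_lower)
  show "Re (wp z) \<in> (\<lambda>z. Re (wp z)) ` sphere 0 1" using assms by auto
  show "bdd_below ((\<lambda>z. Re (wp z)) ` sphere 0 1)"
    using Re_wp_pos_on_circle by (intro bdd_belowI[of _ 0]) fastforce
qed

lemma omega0_nonneg: "0 \<le> omega0"
  unfolding omega0_def
  using Re_wp_pos_on_circle by (intro cInf_greatest) (auto intro!: exI[of _ 1] less_imp_le)

lemma omega0_less_Re_wp:
  assumes "z \<in> ball 0 1"
  shows "omega0 < Re (wp z)"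
proof -
  have "0 < Re ((\<lambda>z. wp z - of_real omega0) z)"
    using wp_minus_const_not_constant omega0_le_Re_wp assms
    by (intro Re_pos_if_Re_nonneg_on_frontier[of "ball 0 1"])
       (auto intro!: holomorphic_intros continuous_intros continuous_on_wp)
  then show ?thesis by simp
qed

lemma Re_wp_pos: "z \<in> ball 0 1 \<Longrightarrow> 0 < Re (wp z)"
  using omega0_less_Re_wp omega0_nonneg by fastforce

lemma Re_wp_less:
  assumes "z \<in> ball 0 1"
  shows "Re (wp z) < 1 + exp 1"
proof -
  have "Re (wp z - 1) \<le> cmod z * exp (Re z)"
    using complex_Re_le_cmod[of "wp z - 1"] by (simp add: norm_wp_minus_one)
  also have "\<dots> < 1 * exp 1"
    using assms complex_Re_le_cmod[of z] by (intro mult_less_le_imp_less) auto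
  finally show ?thesis by simp
qed

lemma abs_Arg_wp_less_gamma0:
  assumes z: "z \<in> ball 0 1"
  shows "\<bar>Arg (wp z)\<bar> < gamma0 * pi / 2"
proof -
  have bdd: "bdd_above ((\<lambda>z. \<bar>Arg (wp z)\<bar>) ` ball 0 1)"
  proof (rule bdd_aboveI2)
    show "\<bar>Arg (wp u)\<bar> \<le> pi" for u
      using mpi_less_Arg[of "wp u"] Arg_le_pi[of "wp u"] by linarith
  qed
  obtain u where u: "u \<in> wp ` ball 0 1" and less: "\<bar>Arg (wp z)\<bar> < \<bar>Arg u\<bar>"
    using open_has_larger_abs_Arg[OF open_wp_image _ Re_wp_pos[OF z]] z by blast
  have "\<bar>Arg u\<bar> \<le> (SUP z\<in>ball 0 1. \<bar>Arg (wp z)\<bar>)"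
    using u bdd by (auto intro: cSUP_upper)
  with less show ?thesis unfolding gamma0_def unit_disk_def by simp
qed

lemma Re_wp_cis: "Re (wp (exp (\<i> * of_real t))) = 1 + exp (cos t) * cos (t + sin t)"
  by (simp add: Re_wp Re_exp Im_exp cos_add)

lemma Im_wp_cis: "Im (wp (exp (\<i> * of_real t))) = exp (cos t) * sin (t + sin t)"
  by (simp add: Im_wp Re_exp Im_exp sin_add algebra_simps)

lemma Tfun_eq_wp:
  "Tfun t = (Im (wp (exp (\<i> * of_real t))))^2 / (4 * Re (wp (exp (\<i> * of_real t))))"
proof -
  have "exp (2 * cos t) = (exp (cos t))^2" by (simp flip: exp_double)
  then show ?thesis unfolding Tfun_def Re_wp_cis Im_wp_cis by (simp add: power_mult_distrib)
qed

lemma Tfun_minus: "Tfun (- t) = Tfun t"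
proof -
  have "- t + sin (- t) = - (t + sin t)" by simp
  then have "sin (- t + sin (- t)) = - sin (t + sin t)" "cos (- t + sin (- t)) = cos (t + sin t)"
    by (simp_all only: sin_minus cos_minus)
  then show ?thesis unfolding Tfun_def by simp
qed

lemma Tfun_le_b_const:
  assumes "t \<in> {0..pi}"
  shows "Tfun t \<le> b_const"
proof -
  have "continuous_on {0..pi} (\<lambda>t. wp (exp (\<i> * of_real t)))"
    by (rule continuous_on_compose2[OF continuous_on_wp[of UNIV]]) (auto intro!: continuous_intros)
  then have "continuous_on {0..pi} Tfun"
    unfolding Tfun_eq_wp[abs_def] using Re_wp_pos_on_circle[of "exp (\<i> * of_real _)"]
    by (intro continuous_intros) (auto simp: less_imp_neq[symmetric])
  then have "bdd_above (Tfun ` {0..pi})"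
    by (intro bounded_imp_bdd_above compact_imp_bounded compact_continuous_image) auto
  then show ?thesis unfolding b_const_def using assms by (intro cSup_upper) auto
qed

lemma b_const_pos: "0 < b_const"
proof -
  have "0 < cos (1::real)" using pi_gt3 by (intro cos_gt_zero) auto
  then have "0 < Im (wp (exp (\<i> * of_real (pi/2))))"
    unfolding Im_wp_cis by (simp add: sin_add)
  then have "0 < Tfun (pi/2)"
    using Re_wp_pos_on_circle[of "exp (\<i> * of_real (pi/2))"] unfolding Tfun_eq_wp by simp
  also have "\<dots> \<le> b_const" using pi_gt_zero by (intro Tfun_le_b_const) simp
  finally show ?thesis .
qed

lemma norm_wp_minus_le_on_circle:
  assumes z: "cmod z = 1" and a: "b_const \<le> a"
  shows "cmod (wp z - of_real a) \<le> Re (wp z) + a"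
proof -
  have "z \<noteq> 0" using z by auto
  define t where "t = Arg z"
  have z_eq: "z = exp (\<i> * of_real t)" using Arg_eq[OF \<open>z \<noteq> 0\<close>] z unfolding t_def by simp
  have "\<bar>t\<bar> \<in> {0..pi}" unfolding t_def using mpi_less_Arg[of z] Arg_le_pi[of z] by auto
  then have "Tfun \<bar>t\<bar> \<le> b_const" by (rule Tfun_le_b_const)
  moreover have "Tfun \<bar>t\<bar> = Tfun t" by (cases "t \<ge> 0") (auto simp: Tfun_minus)
  ultimately have "(Im (wp z))^2 / (4 * Re (wp z)) \<le> a"
    using a unfolding z_eq Tfun_eq_wp by simp
  then have "(Im (wp z))^2 \<le> 4 * a * Re (wp z)"
    using Re_wp_pos_on_circle[OF z] by (simp add: field_simps)
  then have "(Re (wp z) - a)^2 + (Im (wp z))^2 \<le> (Re (wp z) + a)^2"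
    by (simp add: power2_eq_square algebra_simps)
  moreover have "(cmod (wp z - of_real a))^2 = (Re (wp z) - a)^2 + (Im (wp z))^2"
    by (simp add: cmod_power2)
  ultimately have "(cmod (wp z - of_real a))^2 \<le> (Re (wp z) + a)^2" by simp
  then show ?thesis
    by (rule power2_le_imp_le) (use Re_wp_pos_on_circle[OF z] b_const_pos a in simp)
qed

lemma norm_wp_minus_less:
  assumes z: "z \<in> ball 0 1" and a: "b_const \<le> a"
  shows "cmod (wp z - of_real a) < Re (wp z) + a"
proof -
  define g where "g = (\<lambda>w. wp w - of_real a)"
  have "cmod (g z) < Re (g z) + 2 * a"
  proof (rule norm_less_Re_add_if_on_frontier[OF _ _ _ _ _ _ _ _ z])
    show "g holomorphic_on ball 0 1" "continuous_on (closure (ball 0 1)) g"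
      unfolding g_def by (auto intro!: holomorphic_intros continuous_on_diff continuous_on_wp)
    show "\<not> g constant_on ball 0 1" unfolding g_def by (rule wp_minus_const_not_constant)
    show "cmod (g w) \<le> Re (g w) + 2 * a" if "w \<in> frontier (ball 0 1)" for w
      using norm_wp_minus_le_on_circle[OF _ a, of w] that unfolding g_def by simp
    show "0 < 2 * a" using b_const_pos a by simp
  qed auto
  then show ?thesis unfolding g_def by simp
qed

section \<open>The quotient \<open>z f'(z) / f(z)\<close>\<close>

lemma sq_eq_one_plus_log_deriv:
  assumes "f \<in> classA" and "quot_defined f"
  obtains F where "F holomorphic_on ball 0 1" "\<And>z. z \<in> ball 0 1 \<Longrightarrow> F z \<noteq> 0"
    "\<And>z. z \<in> ball 0 1 \<Longrightarrow> sq f z = 1 + z * deriv F z / F z"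
proof -
  have f: "f holomorphic_on ball 0 1" "f 0 = 0" "deriv f 0 = 1"
    using assms(1) unfolding classA_def unit_disk_def by auto
  define F where "F = (\<lambda>z. if z = 0 then deriv f 0 else (f z - f 0) / (z - 0))"
  have F: "F holomorphic_on ball 0 1" unfolding F_def by (rule pole_lemma[OF f(1)]) simp
  have F_nonzero: "F z \<noteq> 0" if "z \<in> ball 0 1" for z
    using assms(2) that f unfolding F_def quot_defined_def unit_disk_def by auto
  have f_eq: "f z = z * F z" if "z \<in> ball 0 1" for z
    using f(2) unfolding F_def by auto
  have deriv_f: "deriv f z = F z + z * deriv F z" if z: "z \<in> ball 0 1" for z
  proof -
    have "\<forall>\<^sub>F x in nhds z. f x = x * F x"
      using eventually_nhds_in_open[OF open_ball z] by (rule eventually_mono) (use f_eq in auto)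
    then have "deriv f z = deriv (\<lambda>x. x * F x) z" by (rule deriv_cong_ev) simp
    also have "\<dots> = F z + z * deriv F z"
      using holomorphic_derivI[OF F open_ball z]
      by (intro DERIV_imp_deriv) (auto intro!: derivative_eq_intros)
    finally show ?thesis .
  qed
  show ?thesis
  proof (rule that[OF F F_nonzero])
    fix z :: complex assume z: "z \<in> ball 0 1"
    show "sq f z = 1 + z * deriv F z / F z"
      using deriv_f[OF z] f_eq[OF z] F_nonzero[OF z] by (cases "z = 0") (auto simp: sq_def field_simps)
  qed
qed

lemma sq_holomorphic:
  assumes "f \<in> classA" and "quot_defined f"
  shows "sq f holomorphic_on ball 0 1"
proof -
  obtain F where F: "F holomorphic_on ball 0 1" "\<And>z. z \<in> ball 0 1 \<Longrightarrow> F z \<noteq> 0"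
    "\<And>z. z \<in> ball 0 1 \<Longrightarrow> sq f z = 1 + z * deriv F z / F z"
    using sq_eq_one_plus_log_deriv[OF assms] by blast
  have "(\<lambda>z. 1 + z * deriv F z / F z) holomorphic_on ball 0 1"
    using F(1,2) by (intro holomorphic_intros) auto
  then show ?thesis by (rule holomorphic_transform) (use F(3) in auto)
qed

lemma sq_in_wp_image:
  assumes "f \<in> S_wp" and "z \<in> unit_disk"
  shows "sq f z \<in> wp ` unit_disk"
  using assms unfolding S_wp_def subordinate_def by blast

section \<open>A domain of univalence of \<open>\<wp>\<close>\<close>

lemma inj_on_if_Re_deriv_pos:
  assumes S: "convex S"
    and f': "\<And>z. z \<in> S \<Longrightarrow> (f has_field_derivative f' z) (at z)"
    and pos: "\<And>z. z \<in> S \<Longrightarrow> 0 < Re (f' z)"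
  shows "inj_on f S"
proof (rule inj_onI, rule ccontr)
  fix z1 z2 assume z1: "z1 \<in> S" and z2: "z2 \<in> S" and eq: "f z1 = f z2" and "z1 \<noteq> z2"
  define d where "d = z2 - z1"
  have "d \<noteq> 0" using \<open>z1 \<noteq> z2\<close> unfolding d_def by simp
  define G where "G = (\<lambda>t::real. Re (f (z1 + of_real t * d) / d))"
  have "G 0 < G 1"
  proof (rule DERIV_pos_imp_increasing[of 0 1 G])
    fix t :: real assume t: "0 \<le> t" "t \<le> 1"
    have "z1 + of_real t * d = (1 - t) *\<^sub>R z1 + t *\<^sub>R z2"
      unfolding d_def by (simp add: scaleR_conv_of_real algebra_simps)
    then have zt: "z1 + of_real t * d \<in> S" using S z1 z2 t by (metis convexD_alt)
    have "((\<lambda>w. z1 + w * d) has_field_derivative d) (at (of_real t))"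
      by (auto intro!: derivative_eq_intros)
    then have "((\<lambda>w. f (z1 + w * d)) has_field_derivative f' (z1 + of_real t * d) * d) (at (of_real t))"
      using DERIV_chain2[where f = f and g = "\<lambda>w. z1 + w * d"] f'[OF zt] by simp
    then have "((\<lambda>w. f (z1 + w * d) / d) has_field_derivative f' (z1 + of_real t * d)) (at (of_real t))"
      using DERIV_cdivide[where c = d] \<open>d \<noteq> 0\<close> by fastforce
    then have "(G has_field_derivative Re (f' (z1 + of_real t * d))) (at t)"
      unfolding G_def by (intro has_field_derivative_Re has_vector_derivative_real_field)
    then show "\<exists>y. (G has_field_derivative y) (at t) \<and> 0 < y" using pos[OF zt] by blast
  qed simp
  moreover have "G 0 = G 1" unfolding G_def d_def using eq by simp
  ultimately show False by simp
qed

lemma convex_strict_epigraph_Im: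
  assumes \<phi>: "convex_on I \<phi>"
  shows "convex {z. Im z \<in> I \<and> \<phi> (Im z) < Re z + c}"
proof (rule convexI)
  fix x y :: complex and u v :: real
  assume x: "x \<in> {z. Im z \<in> I \<and> \<phi> (Im z) < Re z + c}" and y: "y \<in> {z. Im z \<in> I \<and> \<phi> (Im z) < Re z + c}"
    and uv: "0 \<le> u" "0 \<le> v" "u + v = 1"
  have "Im (u *\<^sub>R x + v *\<^sub>R y) = u *\<^sub>R Im x + v *\<^sub>R Im y" by simp
  moreover have "u *\<^sub>R Im x + v *\<^sub>R Im y \<in> I"
    using convex_on_imp_convex[OF \<phi>] x y uv by (intro convexD) auto
  moreover have "\<phi> (u *\<^sub>R Im x + v *\<^sub>R Im y) \<le> u * \<phi> (Im x) + v * \<phi> (Im y)"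
    using \<phi> x y uv unfolding convex_on_def by blast
  moreover have "u * \<phi> (Im x) + v * \<phi> (Im y) < u * (Re x + c) + v * (Re y + c)"
  proof (cases "u = 0")
    case True
    then show ?thesis using y uv by simp
  next
    case False
    then have "u * \<phi> (Im x) < u * (Re x + c)" using x uv by (intro mult_strict_left_mono) auto
    moreover have "v * \<phi> (Im y) \<le> v * (Re y + c)" using y uv by (intro mult_left_mono) auto
    ultimately show ?thesis by linarith
  qed
  moreover have "u * (Re x + c) + v * (Re y + c) = Re (u *\<^sub>R x + v *\<^sub>R y) + c"
  proof -
    have "c * u + c * v = c" using uv(3) by (metis distrib_left mult.right_neutral)
    then show ?thesis by (simp add: algebra_simps)
  qed
  ultimately show "u *\<^sub>R x + v *\<^sub>R y \<in> {z. Im z \<in> I \<and> \<phi> (Im z) < Re z + c}" by simp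
qed

lemma cos_pos_if_abs_less_one: "\<bar>y\<bar> < 1 \<Longrightarrow> 0 < cos (y::real)"
  using pi_gt3 by (intro cos_gt_zero_pi) auto

lemma mult_inverse_cos_square_mono:
  fixes a b :: real
  assumes "-1 < a" "a \<le> b" "b < 1"
  shows "a / (cos a)^2 \<le> b / (cos b)^2"
proof -
  have mono_nonneg: "s / (cos s)^2 \<le> t / (cos t)^2" if "0 \<le> s" "s \<le> t" "t < 1" for s t :: real
  proof -
    have "0 < cos t" using that by (intro cos_pos_if_abs_less_one) auto
    moreover have "cos t \<le> cos s" using that pi_gt3 by (intro cos_monotone_0_pi_le) auto
    ultimately have "(cos t)^2 \<le> (cos s)^2" by (intro power_mono) auto
    with \<open>0 < cos t\<close> show ?thesis using that by (intro frac_le) auto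
  qed
  consider "0 \<le> a" | "a < 0" "0 \<le> b" | "b < 0" using assms by linarith
  then show ?thesis
  proof cases
    case 1
    then show ?thesis using mono_nonneg assms by blast
  next
    case 2
    then have "a / (cos a)^2 \<le> 0" "0 \<le> b / (cos b)^2"
      by (simp_all add: divide_nonpos_nonneg divide_nonneg_nonneg)
    then show ?thesis by linarith
  next
    case 3
    then show ?thesis using mono_nonneg[of "-b" "-a"] assms by simp
  qed
qed

lemma convex_on_mult_tan: "convex_on {-1<..<1} (\<lambda>y::real. y * tan y)"
proof (rule convex_on_realI[where f' = "\<lambda>y. tan y + y / (cos y)^2"])
  fix x :: real assume "x \<in> {-1<..<1}"
  then have "cos x \<noteq> 0" using cos_pos_if_abs_less_one[of x] by (auto simp: abs_less_iff)
  then show "((\<lambda>y. y * tan y) has_real_derivative tan x + x / (cos x)^2) (at x)"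
    by (auto intro!: derivative_eq_intros simp: field_simps power2_eq_square)
next
  fix x y :: real assume xy: "x \<in> {-1<..<1}" "y \<in> {-1<..<1}" "x \<le> y"
  have "tan x \<le> tan y"
    using xy pi_gt3 by (cases "x = y") (auto intro!: less_imp_le[OF tan_monotone])
  moreover have "x / (cos x)^2 \<le> y / (cos y)^2" using xy by (intro mult_inverse_cos_square_mono) auto
  ultimately show "tan x + x / (cos x)^2 \<le> tan y + y / (cos y)^2" by simp
qed simp

(* (1 + z) e\<^sup>z = \<wp>'(z) *)
definition univalence_region :: "complex set" where
  "univalence_region = {z. cmod z < 1 \<and> 0 < Re ((1 + z) * exp z)}"

lemma Re_deriv_wp_pos_iff:
  assumes "cmod z < 1"
  shows "0 < Re ((1 + z) * exp z) \<longleftrightarrow> Im z * tan (Im z) < Re z + 1"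
proof -
  have "0 < cos (Im z)"
    using abs_Im_le_cmod[of z] assms by (intro cos_pos_if_abs_less_one) linarith
  then have "(1 + Re z) * cos (Im z) - Im z * sin (Im z) = (Re z + 1 - Im z * tan (Im z)) * cos (Im z)"
    by (simp add: tan_def field_simps)
  with \<open>0 < cos (Im z)\<close> show ?thesis
    unfolding Re_deriv_wp by (simp add: zero_less_mult_iff)
qed

lemma convex_univalence_region: "convex univalence_region"
proof -
  have eq: "univalence_region = ball 0 1 \<inter> {z. Im z \<in> {-1<..<1} \<and> Im z * tan (Im z) < Re z + 1}"
  proof (intro set_eqI iffI)
    fix z assume "z \<in> univalence_region"
    then have "cmod z < 1" "0 < Re ((1 + z) * exp z)" unfolding univalence_region_def by auto
    moreover have "\<bar>Im z\<bar> < 1" using abs_Im_le_cmod[of z] \<open>cmod z < 1\<close> by linarith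
    ultimately show "z \<in> ball 0 1 \<inter> {z. Im z \<in> {-1<..<1} \<and> Im z * tan (Im z) < Re z + 1}"
      using Re_deriv_wp_pos_iff by (auto simp: abs_less_iff)
  next
    fix z assume "z \<in> ball 0 1 \<inter> {z. Im z \<in> {-1<..<1} \<and> Im z * tan (Im z) < Re z + 1}"
    then show "z \<in> univalence_region"
      using Re_deriv_wp_pos_iff unfolding univalence_region_def by auto
  qed
  show ?thesis
    unfolding eq by (intro convex_Int convex_ball convex_strict_epigraph_Im convex_on_mult_tan)
qed

lemma open_univalence_region: "open univalence_region"
proof -
  have eq: "univalence_region = ball 0 1 \<inter> {z. 0 < Re ((1 + z) * exp z)}"
    unfolding univalence_region_def by auto
  show ?thesis
    unfolding eq by (intro open_Int open_ball open_Collect_less continuous_intros)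
qed

lemma univalence_region_subset_disk: "univalence_region \<subseteq> ball 0 1"
  unfolding univalence_region_def by auto

lemma zero_in_univalence_region: "0 \<in> univalence_region"
  unfolding univalence_region_def by simp

lemma inj_on_wp_univalence_region: "inj_on wp univalence_region"
  using has_field_derivative_wp
  by (intro inj_on_if_Re_deriv_pos[OF convex_univalence_region]) (auto simp: univalence_region_def)

lemma wp_boundary_values_outside:
  assumes "z \<in> closure univalence_region - univalence_region"
  shows "Re (wp z) \<le> (exp 1 - 1) * cmod (wp z - 1)"
proof -
  have "closure univalence_region \<subseteq> {z. cmod z \<le> 1 \<and> 0 \<le> Re ((1 + z) * exp z)}"
    unfolding univalence_region_def
    by (intro closure_minimal closed_Collect_conj closed_Collect_le continuous_intros) auto
  then have z: "cmod z \<le> 1" "0 \<le> Re ((1 + z) * exp z)" using assms by auto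
  show ?thesis
  proof (cases "cmod z = 1")
    case True
    then show ?thesis by (rule Re_wp_le_on_circle)
  next
    case False
    then have "Re ((1 + z) * exp z) = 0"
      using assms z unfolding univalence_region_def by auto
    with z(1) show ?thesis by (rule Re_wp_le_on_critical_curve)
  qed
qed

lemma frontier_wp_image_subset:
  "frontier (wp ` univalence_region) \<subseteq> wp ` (closure univalence_region - univalence_region)"
proof -
  have "compact (closure univalence_region)"
    using bounded_subset[OF bounded_ball univalence_region_subset_disk] by (simp add: compact_closure)
  then have "closed (wp ` closure univalence_region)"
    by (intro compact_imp_closed compact_continuous_image continuous_on_wp)
  then have "closure (wp ` univalence_region) \<subseteq> wp ` closure univalence_region"
    by (intro closure_minimal image_mono closure_subset)
  moreover have "open (wp ` univalence_region)"
    by (rule open_mapping_thm3[OF wp_holomorphic open_univalence_region inj_on_wp_univalence_region])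
  ultimately show ?thesis
    unfolding frontier_def by (auto simp: interior_open)
qed

lemma in_wp_image_univalence_region:
  assumes w: "(exp 1 - 1) * cmod (w - 1) < Re w"
  shows "w \<in> wp ` univalence_region"
proof (rule ccontr)
  assume "w \<notin> wp ` univalence_region"
  define H where "H = {w. (exp 1 - 1) * cmod (w - 1) < Re w}"
  have "closed_segment 1 w \<subseteq> H"
  proof
    fix p assume "p \<in> closed_segment 1 w"
    then obtain u :: real where u: "0 \<le> u" "u \<le> 1" "p = 1 + u * (w - 1)"
      unfolding closed_segment_def by (auto simp: scaleR_conv_of_real algebra_simps)
    show "p \<in> H"
    proof (cases "u = 0")
      case True
      then show ?thesis using u unfolding H_def by simp
    next
      case False
      have "(exp 1 - 1) * cmod (p - 1) = u * ((exp 1 - 1) * cmod (w - 1))"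
        using u by (simp add: norm_mult)
      also have "\<dots> < u * Re w" using u w False by (intro mult_strict_left_mono) auto
      also have "\<dots> \<le> Re p" unfolding u(3) using u(2) by (simp add: right_diff_distrib)
      finally show ?thesis unfolding H_def by simp
    qed
  qed
  moreover have "1 \<in> wp ` univalence_region"
    using zero_in_univalence_region by (force simp: wp_def)
  ultimately have "closed_segment 1 w \<inter> frontier (wp ` univalence_region) \<noteq> {}"
    using \<open>w \<notin> wp ` univalence_region\<close>
    by (intro connected_Int_frontier[OF connected_segment]) auto
  then obtain z where "z \<in> closure univalence_region - univalence_region" "wp z \<in> H"
    using frontier_wp_image_subset \<open>closed_segment 1 w \<subseteq> H\<close> by blast
  then show False using wp_boundary_values_outside unfolding H_def by fastforce
qed

section \<open>The inclusions\<close>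

lemma S_wp_subset_if_wp_values:
  assumes "\<And>u. u \<in> unit_disk \<Longrightarrow> P (wp u)"
  shows "S_wp \<subseteq> {f \<in> classA. quot_defined f \<and> (\<forall>z\<in>unit_disk. P (sq f z))}"
proof
  fix f assume f: "f \<in> S_wp"
  have "P (sq f z)" if z: "z \<in> unit_disk" for z
  proof -
    obtain u where "u \<in> unit_disk" "sq f z = wp u"
      using sq_in_wp_image[OF f z] by (rule imageE)
    then show ?thesis using assms by simp
  qed
  with f show "f \<in> {f \<in> classA. quot_defined f \<and> (\<forall>z\<in>unit_disk. P (sq f z))}"
    unfolding S_wp_def by blast
qed

lemma S_wp_subset_starlike_order:
  assumes "\<alpha> \<le> omega0"
  shows "S_wp \<subseteq> starlike_order \<alpha>"
  unfolding starlike_order_def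
proof (rule S_wp_subset_if_wp_values)
  fix u assume "u \<in> unit_disk"
  then show "\<alpha> < Re (wp u)" using assms omega0_less_Re_wp[of u] unfolding unit_disk_def by simp
qed

lemma starlike_order_subset_starlike: "0 \<le> \<alpha> \<Longrightarrow> starlike_order \<alpha> \<subseteq> starlike"
  unfolding starlike_def starlike_order_def by (auto intro: order.strict_trans1)

lemma S_wp_subset_classM:
  assumes "1 + exp 1 \<le> \<beta>"
  shows "S_wp \<subseteq> classM \<beta>"
  unfolding classM_def
proof (rule S_wp_subset_if_wp_values)
  fix u assume "u \<in> unit_disk"
  then show "Re (wp u) < \<beta>" using assms Re_wp_less[of u] unfolding unit_disk_def by simp
qed

lemma S_wp_subset_strongly_starlike:
  assumes "gamma0 \<le> \<gamma>"
  shows "S_wp \<subseteq> strongly_starlike \<gamma>"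
  unfolding strongly_starlike_def
proof (rule S_wp_subset_if_wp_values)
  fix u assume "u \<in> unit_disk"
  then have "\<bar>Arg (wp u)\<bar> < gamma0 * pi / 2"
    unfolding unit_disk_def by (rule abs_Arg_wp_less_gamma0)
  moreover have "gamma0 * pi / 2 \<le> \<gamma> * pi / 2" using assms pi_gt_zero by simp
  ultimately show "\<bar>Arg (wp u)\<bar> < \<gamma> * pi / 2" by linarith
qed

lemma strongly_starlike_subset_starlike: "\<gamma> \<le> 1 \<Longrightarrow> strongly_starlike \<gamma> \<subseteq> starlike"
proof
  fix f assume "\<gamma> \<le> 1" "f \<in> strongly_starlike \<gamma>"
  then have f: "f \<in> classA" "quot_defined f"
    and Arg_\<gamma>: "\<And>z. z \<in> ball 0 1 \<Longrightarrow> \<bar>Arg (sq f z)\<bar> < \<gamma> * pi / 2"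
    unfolding strongly_starlike_def unit_disk_def by auto
  have "\<gamma> * pi / 2 \<le> pi / 2" using \<open>\<gamma> \<le> 1\<close> pi_gt_zero by simp
  then have Arg: "\<bar>Arg (sq f z)\<bar> < pi / 2" if "z \<in> ball 0 1" for z
    using Arg_\<gamma>[OF that] by linarith
  have "0 < Re (sq f z)" if "z \<in> ball 0 1" for z
    by (rule Re_pos_if_abs_Arg_less[OF _ _ sq_holomorphic[OF f] _ _ Arg that]) (auto simp: sq_def)
  then show "f \<in> starlike"
    using f unfolding starlike_def starlike_order_def unit_disk_def by auto
qed

lemma S_wp_subset_ST_p:
  assumes "b_const \<le> a"
  shows "S_wp \<subseteq> ST_p a"
  unfolding ST_p_def
proof (rule S_wp_subset_if_wp_values)
  fix u assume "u \<in> unit_disk"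
  then show "cmod (wp u - of_real a) < Re (wp u) + a"
    using norm_wp_minus_less[OF _ assms] unfolding unit_disk_def by simp
qed

lemma k_ST_subset_S_wp:
  assumes k: "exp 1 - 1 \<le> k"
  shows "k_ST k \<subseteq> S_wp"
proof
  fix f assume "f \<in> k_ST k"
  then have f: "f \<in> classA" "quot_defined f"
    and k_ST: "\<And>z. z \<in> ball 0 1 \<Longrightarrow> k * cmod (sq f z - 1) < Re (sq f z)"
    unfolding k_ST_def unit_disk_def by auto
  obtain g where g: "g holomorphic_on wp ` univalence_region"
    "\<And>z. z \<in> univalence_region \<Longrightarrow> g (wp z) = z"
    using holomorphic_has_inverse[OF wp_holomorphic open_univalence_region inj_on_wp_univalence_region]
    by metis
  have sq_in: "sq f z \<in> wp ` univalence_region" if "z \<in> ball 0 1" for z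
  proof (rule in_wp_image_univalence_region)
    have "(exp 1 - 1) * cmod (sq f z - 1) \<le> k * cmod (sq f z - 1)"
      using k by (intro mult_right_mono) auto
    then show "(exp 1 - 1) * cmod (sq f z - 1) < Re (sq f z)" using k_ST[OF that] by linarith
  qed
  have "subordinate (sq f) wp"
    unfolding subordinate_def
  proof (intro exI conjI ballI)
    show "(g \<circ> sq f) holomorphic_on unit_disk"
      unfolding unit_disk_def using sq_in
      by (intro holomorphic_on_compose_gen[OF sq_holomorphic[OF f] g(1)]) auto
    show "(g \<circ> sq f) ` unit_disk \<subseteq> unit_disk"
      using sq_in g(2) univalence_region_subset_disk unfolding unit_disk_def by force
    show "(g \<circ> sq f) 0 = 0"
      using g(2)[OF zero_in_univalence_region] by (simp add: sq_def wp_def)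
    show "sq f z = wp ((g \<circ> sq f) z)" if "z \<in> unit_disk" for z
      using sq_in[of z] g(2) that unfolding unit_disk_def by force
  qed
  then show "f \<in> S_wp" unfolding S_wp_def using f by auto
qed

theorem mainTheorem3:
  shows "(\<forall>\<alpha>. 0 \<le> \<alpha> \<and> \<alpha> \<le> omega0 \<longrightarrow>
            S_wp \<subseteq> starlike_order \<alpha> \<and> starlike_order \<alpha> \<subseteq> starlike)
       \<and> (\<forall>\<beta>. \<beta> \<ge> 1 + exp 1 \<longrightarrow> S_wp \<subseteq> classM \<beta>)
       \<and> S_wp \<subseteq> starlike_order omega0 \<inter> classM (1 + exp 1)
       \<and> (\<forall>\<gamma>. gamma0 \<le> \<gamma> \<and> \<gamma> \<le> 1 \<longrightarrow>
            S_wp \<subseteq> strongly_starlike \<gamma> \<and> strongly_starlike \<gamma> \<subseteq> starlike)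
       \<and> (\<forall>a. a \<ge> b_const \<longrightarrow> S_wp \<subseteq> ST_p a)
       \<and> (\<forall>k. k \<ge> exp 1 - 1 \<longrightarrow> k_ST k \<subseteq> S_wp)"
proof -
  have "S_wp \<subseteq> starlike_order omega0 \<inter> classM (1 + exp 1)"
    using S_wp_subset_starlike_order[OF order_refl] S_wp_subset_classM[OF order_refl] by blast
  then show ?thesis
    using S_wp_subset_starlike_order starlike_order_subset_starlike S_wp_subset_classM
      S_wp_subset_strongly_starlike strongly_starlike_subset_starlike S_wp_subset_ST_p
      k_ST_subset_S_wp
    by blast
qed
end
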